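(* Let $L\geq1$ be an integer, $P\geq0$, $p_B\in[0,1]$, and $\alpha\sim\mathrm{Binomial}(L,1-p_B)$. For integers $i\geq0$ let $$\bar R(i):=\mathbb{E}\Big[\log\Big(1+\Big|\textstyle\sum_{l=1}^i e^{j\theta_l}\Big|^2P\Big)\Big],$$ where $\theta_1,\theta_2,\ldots$ are i.i.d. $\mathrm{Uniform}(0,2\pi)$ (independent of $\alpha$; the expectation is over the $\theta_l$ only, so $\bar R$ is a deterministic function). Then $$\sup_{r\in\mathbb{R}}r\cdot\mathbb{P}\big(\bar R(\alpha)\geq r\big)=\max_{i\in\{1,\ldots,L\}}\mathbb{P}(\alpha\geq i)\,\bar R(i).$$
   Context: The left-hand side is the outage rate asymptotically (in the frame length) achievable by non-coherent joint transmission with phase diversity over a multi-point intermittent block fading channel with $L$ transmitters, each blocked independently with probability $p_B$. $\log$ is the logarithm in a fixed base. *)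

theory Defs
  imports "HOL-Probability.Probability"
begin

definition phase_measure :: "nat \<Rightarrow> (nat \<Rightarrow> real) measure" where
  "phase_measure i = PiM {..<i} (\<lambda>_. uniform_measure lborel {0..2*pi})"

definition Rbar :: "real \<Rightarrow> real \<Rightarrow> nat \<Rightarrow> real" where
  "Rbar b P i = (\<integral>\<theta>. log b (1 + (cmod (\<Sum>l<i. cis (\<theta> l)))^2 * P) \<partial>phase_measure i)"

end

theory Submission
  imports Defs "HOL-Complex_Analysis.Complex_Analysis"
begin

(*
  Adding a transmitter cannot decrease the average rate. Rbar b P (Suc n) averages
  log (1 + |s + e^(jt)|^2 P) over the new phase t, where s is the sum of the old phasors, and
  w |-> log (1 + |w|^2 P) satisfies the sub-mean-value inequality on circles: by Cauchy-Schwarz,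
  |1 + P cnj s w|^2 <= (1 + |s|^2 P) (1 + |w|^2 P) with equality at w = s, and by Jensen's formula
  the circle mean of log |1 + P cnj s w| is at least its value at the centre w = s.
  Hence Rbar b P is nondecreasing with Rbar b P 0 = 0, so for r > 0 the superlevel set
  {k. Rbar b P k >= r} is a tail {k. k >= i} with r <= Rbar b P i, and
  r Pr(alpha >= i) is maximal at r = Rbar b P i.
*)

lemma has_integral_Ln_one_plus_cis:
  fixes z :: complex
  assumes "norm z < 1"
  shows "((\<lambda>t. Ln (1 + z * cis t)) has_integral 0) {0..2*pi}"
proof -
  have Ln_domain: "1 + z * w \<notin> \<real>\<^sub>\<le>\<^sub>0" if "norm w \<le> 1" for w
  proof -
    have "norm (z * w) < 1"
      using assms that mult_left_mono[of "norm w" 1 "norm z"] by (simp add: norm_mult)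
    then have "Re (z * w) > -1"
      using abs_Re_le_cmod[of "z * w"] by linarith
    then show ?thesis
      by (auto simp: complex_nonpos_Reals_iff)
  qed
  have "((\<lambda>w. Ln (1 + z * w) / (w - 0)) has_contour_integral 2 * of_real pi * \<i> * Ln (1 + z * 0))
      (circlepath 0 1)"
    by (rule Cauchy_integral_circlepath)
      (use Ln_domain in \<open>auto intro!: holomorphic_intros continuous_intros\<close>)
  then have "((\<lambda>t. Ln (1 + z * cis t) / cis t * \<i> * cis t) has_integral 0) {0..2*pi}"
    by (simp add: circlepath_def has_contour_integral_part_circlepath_iff)
  from has_integral_mult_right[OF this, of "-\<i>"] show ?thesis
    by (simp add: algebra_simps)
qed

lemma has_integral_ln_norm_one_plus_cis:
  fixes z :: complex
  assumes "norm z < 1"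
  shows "((\<lambda>t. ln (norm (1 + z * cis t))) has_integral 0) {0..2*pi}"
proof -
  have "1 + z * cis t \<noteq> 0" for t
  proof
    assume "1 + z * cis t = 0"
    then have "norm (z * cis t) = 1"
      by (metis add_eq_0_iff norm_minus_cancel norm_one)
    with assms show False
      by (simp add: norm_mult)
  qed
  then show ?thesis
    using has_integral_Re[OF has_integral_Ln_one_plus_cis[OF assms]] by simp
qed

lemma has_integral_ln_norm_add_cis:
  fixes A B :: complex
  assumes "norm A \<noteq> norm B"
  shows "((\<lambda>t. ln (norm (A + B * cis t))) has_integral 2*pi * ln (max (norm A) (norm B))) {0..2*pi}"
proof -
  have dominant: "((\<lambda>t. ln (norm (A + B * cis t))) has_integral 2*pi * ln (norm A)) {0..2*pi}"
    if "norm B < norm A" for A B :: complex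
  proof -
    have "A \<noteq> 0"
      using that by auto
    have small: "norm (B / A) < 1"
      using that by (simp add: norm_divide divide_less_eq)
    have "1 + B / A * cis t \<noteq> 0" for t
    proof
      assume "1 + B / A * cis t = 0"
      then have "norm (B / A * cis t) = 1"
        by (metis add_eq_0_iff norm_minus_cancel norm_one)
      with small show False
        by (simp only: norm_mult norm_cis mult_1_right)
    qed
    moreover have "A + B * cis t = A * (1 + B / A * cis t)" for t
      using \<open>A \<noteq> 0\<close> by (simp add: field_simps)
    ultimately have "ln (norm (A + B * cis t)) = ln (norm A) + ln (norm (1 + B / A * cis t))" for t
      using \<open>A \<noteq> 0\<close> by (simp only: norm_mult) (simp add: ln_mult)
    then show ?thesis
      using has_integral_add[OF has_integral_const_real[of "ln (norm A)" 0 "2*pi"]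
          has_integral_ln_norm_one_plus_cis[OF small]]
      by simp
  qed
  show ?thesis
  proof (cases "norm B < norm A")
    case True
    then show ?thesis
      using dominant by (simp add: max_def)
  next
    case False
    have "norm (cnj B + cnj A * cis t) = norm (A + B * cis t)" for t
    proof -
      have "cnj B + cnj A * cis t = cis t * cnj (A + B * cis t)"
        by (simp add: algebra_simps cis_cnj cis_mult)
      then show ?thesis
        by (simp only: norm_mult norm_cis complex_mod_cnj mult_1_left)
    qed
    then show ?thesis
      using dominant[of "cnj A" "cnj B"] assms False by (simp add: max_def)
  qed
qed

lemma norm_one_plus_cnj_mult_sq_le:
  fixes s w :: complex and P :: real
  assumes "P \<ge> 0"
  shows "norm (1 + of_real P * cnj s * w)^2 \<le> (1 + norm s^2 * P) * (1 + norm w^2 * P)"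
proof -
  have "norm (1 + of_real P * cnj s * w) \<le> 1 + P * norm s * norm w"
    using norm_triangle_ineq[of 1 "of_real P * cnj s * w"] assms by (simp add: norm_mult)
  then have "norm (1 + of_real P * cnj s * w)^2 \<le> (1 + P * norm s * norm w)^2"
    by (intro power_mono) auto
  also have "\<dots> = (1 + norm s^2 * P) * (1 + norm w^2 * P) - P * (norm s - norm w)^2"
    by (simp add: algebra_simps power2_eq_square)
  also have "\<dots> \<le> (1 + norm s^2 * P) * (1 + norm w^2 * P)"
    using assms by simp
  finally show ?thesis .
qed

lemma two_ln_norm_one_plus_cnj_mult_le:
  fixes s w :: complex and P :: real
  assumes "P \<ge> 0"
  shows "2 * ln (norm (1 + of_real P * cnj s * w)) \<le> ln (1 + norm s^2 * P) + ln (1 + norm w^2 * P)"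
proof (cases "1 + of_real P * cnj s * w = 0")
  case True
  then show ?thesis
    using assms by simp
next
  case False
  have pos: "0 < 1 + norm s^2 * P" "0 < 1 + norm w^2 * P"
    using assms by (simp_all add: add_pos_nonneg)
  have "2 * ln (norm (1 + of_real P * cnj s * w)) = ln (norm (1 + of_real P * cnj s * w)^2)"
    using False by (simp add: ln_realpow)
  also have "\<dots> \<le> ln ((1 + norm s^2 * P) * (1 + norm w^2 * P))"
    using norm_one_plus_cnj_mult_sq_le[OF assms] False pos by simp
  also have "\<dots> = ln (1 + norm s^2 * P) + ln (1 + norm w^2 * P)"
    using pos by (simp add: ln_mult)
  finally show ?thesis .
qed

lemma integrable_ln_one_plus_norm_add_cis_sq:
  fixes s :: complex and P :: real
  assumes "P \<ge> 0"
  shows "(\<lambda>t. ln (1 + norm (s + cis t)^2 * P)) integrable_on {a..b}"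
  using assms
  by (intro integrable_continuous_interval continuous_intros) (auto simp: add_nonneg_eq_0_iff)

(*
  Cauchy-Schwarz against the vector (1, l s), then Jensen's formula for A + B e^(it) with
  A = 1 + l |s|^2 P and B = l P cnj s. The bound is sharp at l = 1; the free parameter l is
  only there to avoid |A| = |B|, where the integrand has a logarithmic singularity.
*)
lemma integral_ln_one_plus_norm_add_cis_sq_lower_bound:
  fixes s :: complex and P l :: real
  assumes "P \<ge> 0" and "l \<ge> 0" and "1 + l * norm s^2 * P \<noteq> l * norm s * P"
  shows "2*pi * (2 * ln (1 + l * norm s^2 * P) - ln (1 + l^2 * norm s^2 * P))
    \<le> integral {0..2*pi} (\<lambda>t. ln (1 + norm (s + cis t)^2 * P))"
proof -
  define A where "A = complex_of_real (1 + l * norm s^2 * P)"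
  define B where "B = of_real (l * P) * cnj s"
  have norm_A: "norm A = 1 + l * norm s^2 * P"
    unfolding A_def norm_of_real using assms by simp
  have norm_B: "norm B = l * norm s * P"
    using assms by (simp add: B_def norm_mult)
  have "A + B * cis t = 1 + of_real P * cnj (of_real l * s) * (s + cis t)" for t
  proof -
    have "cnj s * s = of_real (norm s^2)"
      using complex_norm_square[of s] by (simp add: mult.commute)
    then show ?thesis
      by (simp add: A_def B_def algebra_simps)
  qed
  then have pointwise: "2 * ln (norm (A + B * cis t)) - ln (1 + l^2 * norm s^2 * P)
      \<le> ln (1 + norm (s + cis t)^2 * P)" for t
    using two_ln_norm_one_plus_cnj_mult_le[OF assms(1), of "of_real l * s" "s + cis t"]
    by (simp add: norm_mult power_mult_distrib)
  have "((\<lambda>t. 2 * ln (norm (A + B * cis t)) - ln (1 + l^2 * norm s^2 * P)) has_integral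
      2 * (2*pi * ln (max (norm A) (norm B))) - 2*pi * ln (1 + l^2 * norm s^2 * P)) {0..2*pi}"
    using has_integral_const_real[of "ln (1 + l^2 * norm s^2 * P)" 0 "2*pi"] assms(3) norm_A norm_B
    by (intro has_integral_diff has_integral_mult_right has_integral_ln_norm_add_cis) auto
  then have "2 * (2*pi * ln (max (norm A) (norm B))) - 2*pi * ln (1 + l^2 * norm s^2 * P)
      \<le> integral {0..2*pi} (\<lambda>t. ln (1 + norm (s + cis t)^2 * P))"
    using integrable_ln_one_plus_norm_add_cis_sq[OF assms(1)] pointwise
    by (intro has_integral_le[OF _ integrable_integral]) auto
  moreover have "2 * (2*pi * ln (norm A)) \<le> 2 * (2*pi * ln (max (norm A) (norm B)))"
    using norm_A assms by (intro mult_left_mono ln_mono) (auto simp: add_pos_nonneg)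
  ultimately show ?thesis
    unfolding norm_A right_diff_distrib by linarith
qed

lemma ln_one_plus_norm_sq_le_circle_mean:
  fixes s :: complex and P :: real
  assumes "P \<ge> 0"
  shows "2*pi * ln (1 + norm s^2 * P) \<le> integral {0..2*pi} (\<lambda>t. ln (1 + norm (s + cis t)^2 * P))"
proof -
  define I where "I = integral {0..2*pi} (\<lambda>t. ln (1 + norm (s + cis t)^2 * P))"
  define h where "h l = 2*pi * (2 * ln (1 + l * norm s^2 * P) - ln (1 + l^2 * norm s^2 * P))"
    for l :: real
  have bound: "h l \<le> I" if "l \<ge> 0" and "1 + l * norm s^2 * P \<noteq> l * norm s * P" for l
    unfolding h_def I_def by (rule integral_ln_one_plus_norm_add_cis_sq_lower_bound[OF assms that])
  have "h 1 \<le> I"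
  proof (cases "1 + norm s^2 * P = norm s * P")
    case False
    then show ?thesis
      using bound[of 1] by simp
  next
    case True
    have nondegenerate: "1 + l * norm s^2 * P \<noteq> l * norm s * P" if "1 < l" for l
    proof -
      have "l * (norm s * P) = l * (1 + norm s^2 * P)"
        using True by simp
      with that show ?thesis
        by (simp add: algebra_simps)
    qed
    have "\<forall>\<^sub>F l in at_right 1. h l \<le> I"
      using eventually_at_right_less[of 1] by eventually_elim (simp add: bound nondegenerate)
    moreover have "(h \<longlongrightarrow> h 1) (at_right 1)"
      unfolding h_def using assms by (intro tendsto_intros) (auto simp: add_nonneg_eq_0_iff)
    ultimately show ?thesis
      by (intro tendsto_le[OF trivial_limit_at_right_real tendsto_const])
  qed
  then show ?thesis
    by (simp add: h_def I_def)
qed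

lemma integral_uniform_measure_Icc:
  fixes f :: "real \<Rightarrow> real"
  assumes "a < b" and "continuous_on UNIV f"
  shows "(\<integral>x. f x \<partial>uniform_measure lborel {a..b}) = integral {a..b} f / (b - a)"
proof -
  have "uniform_measure lborel {a..b} = density lborel (\<lambda>x. indicator {a..b} x / (b - a))"
    unfolding uniform_measure_def using assms(1)
    by (simp add: divide_ennreal flip: ennreal_indicator)
  then have "(\<integral>x. f x \<partial>uniform_measure lborel {a..b})
      = (\<integral>x. indicator {a..b} x *\<^sub>R f x \<partial>lborel) / (b - a)"
    using assms borel_measurable_continuous_onI[OF assms(2)]
    by (simp add: integral_density flip: integral_divide_zero)
  also have "(\<integral>x. indicator {a..b} x *\<^sub>R f x \<partial>lborel) = integral {a..b} f"
    using set_borel_integral_eq_integral(2)[OF borel_integrable_atLeastAtMost'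
        [OF continuous_on_subset[OF assms(2)]]]
    by (simp add: set_lebesgue_integral_def)
  finally show ?thesis .
qed

abbreviation uniform_phase :: "real measure" where
  "uniform_phase \<equiv> uniform_measure lborel {0..2*pi}"

lemma prob_space_uniform_phase: "prob_space uniform_phase"
  by (rule prob_space_uniform_measure) auto

definition rate :: "real \<Rightarrow> real \<Rightarrow> complex \<Rightarrow> real" where
  "rate b P z = log b (1 + (cmod z)^2 * P)"

lemma Rbar_eq_integral_rate:
  "Rbar b P n = (\<integral>\<theta>. rate b P (\<Sum>l<n. cis (\<theta> l)) \<partial>phase_measure n)"
  by (simp add: Rbar_def rate_def)

lemma cis_measurable [measurable]: "cis \<in> borel_measurable borel"
  by (intro borel_measurable_continuous_onI continuous_intros)

lemma rate_measurable [measurable]: "rate b P \<in> borel_measurable borel"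
  unfolding rate_def by measurable

lemma rate_nonneg: "P \<ge> 0 \<Longrightarrow> b > 1 \<Longrightarrow> 0 \<le> rate b P z"
  using add_pos_nonneg[of 1 "(cmod z)^2 * P"] by (simp add: rate_def)

lemma rate_mono:
  assumes "P \<ge> 0" and "b > 1" and "norm z \<le> norm w"
  shows "rate b P z \<le> rate b P w"
proof -
  have "0 < 1 + norm z^2 * P" "0 < 1 + norm w^2 * P"
    using assms(1) by (simp_all add: add_pos_nonneg)
  then show ?thesis
    unfolding rate_def using assms by (simp add: mult_right_mono power_mono)
qed

lemma rate_le_phase_mean:
  assumes "P \<ge> 0" and "b > 1"
  shows "rate b P s \<le> (\<integral>t. rate b P (s + cis t) \<partial>uniform_phase)"
proof -
  have "continuous_on UNIV (\<lambda>t. ln (1 + norm (s + cis t)^2 * P))"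
    using assms(1) by (intro continuous_intros) (auto simp: add_nonneg_eq_0_iff)
  then have "(\<integral>t. ln (1 + norm (s + cis t)^2 * P) \<partial>uniform_phase)
      = integral {0..2*pi} (\<lambda>t. ln (1 + norm (s + cis t)^2 * P)) / (2*pi)"
    using integral_uniform_measure_Icc[of 0 "2*pi"] by simp
  moreover have "ln (1 + norm s^2 * P)
      \<le> integral {0..2*pi} (\<lambda>t. ln (1 + norm (s + cis t)^2 * P)) / (2*pi)"
    using ln_one_plus_norm_sq_le_circle_mean[OF assms(1), of s]
    by (subst pos_le_divide_eq) (auto simp: mult.commute)
  ultimately have "ln (1 + norm s^2 * P) \<le> (\<integral>t. ln (1 + norm (s + cis t)^2 * P) \<partial>uniform_phase)"
    by simp
  then show ?thesis
    using assms(2)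
    by (simp add: rate_def log_def flip: integral_divide_zero) (auto intro: divide_right_mono)
qed

lemma (in prob_space) integrable_rate:
  assumes "P \<ge> 0" and "b > 1" and "f \<in> borel_measurable M" and "\<And>x. norm (f x) \<le> r"
  shows "integrable M (\<lambda>x. rate b P (f x))"
proof (rule integrable_const_bound)
  have "norm (rate b P (f x)) \<le> rate b P (of_real r)" for x
  proof -
    have "norm (f x) \<le> norm (complex_of_real r)"
      using assms(4)[of x] norm_ge_zero[of "f x"] by simp
    then show ?thesis
      using assms(1,2) by (simp add: rate_nonneg rate_mono)
  qed
  then show "AE x in M. norm (rate b P (f x)) \<le> rate b P (of_real r)"
    by simp
  show "(\<lambda>x. rate b P (f x)) \<in> borel_measurable M"
    using assms(3) by measurable
qed

lemma norm_sum_cis_le: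
  fixes \<theta> :: "nat \<Rightarrow> real"
  shows "norm (\<Sum>l<n. cis (\<theta> l)) \<le> real n"
  using norm_sum[of "\<lambda>l. cis (\<theta> l)" "{..<n}"] by simp

lemma prob_space_phase_measure: "prob_space (phase_measure n)"
  unfolding phase_measure_def by (intro prob_space_PiM prob_space_uniform_phase)

lemma Rbar_Suc:
  assumes "P \<ge> 0" and "b > 1"
  shows "Rbar b P (Suc n)
    = (\<integral>\<theta>. (\<integral>t. rate b P ((\<Sum>l<n. cis (\<theta> l)) + cis t) \<partial>uniform_phase) \<partial>phase_measure n)"
proof -
  interpret product_sigma_finite "\<lambda>_::nat. uniform_phase"
    by (simp add: product_sigma_finite_def prob_space_imp_sigma_finite prob_space_uniform_phase)
  have "integrable (PiM (insert n {..<n}) (\<lambda>_. uniform_phase))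
      (\<lambda>\<theta>. rate b P (\<Sum>l<Suc n. cis (\<theta> l)))"
    by (rule prob_space.integrable_rate[OF prob_space_PiM[OF prob_space_uniform_phase] assms
          _ norm_sum_cis_le]) (measurable, auto)
  then show ?thesis
    by (simp add: Rbar_eq_integral_rate phase_measure_def lessThan_Suc product_integral_insert
        add.commute)
qed

lemma integrable_phase_mean_rate:
  assumes "P \<ge> 0" and "b > 1"
  shows "integrable (phase_measure n)
    (\<lambda>\<theta>. \<integral>t. rate b P ((\<Sum>l<n. cis (\<theta> l)) + cis t) \<partial>uniform_phase)"
proof -
  interpret phases: prob_space "phase_measure n"
    by (rule prob_space_phase_measure)
  interpret pair: pair_prob_space "phase_measure n" uniform_phase
    by (intro pair_prob_space.intro pair_sigma_finite.intro prob_space_uniform_phase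
        phases.prob_space_axioms phases.sigma_finite_measure_axioms prob_space_imp_sigma_finite)
  define f where "f p = (\<Sum>l<n. cis (fst p l)) + cis (snd p)" for p :: "(nat \<Rightarrow> real) \<times> real"
  have "f \<in> borel_measurable (phase_measure n \<Otimes>\<^sub>M uniform_phase)"
    unfolding f_def phase_measure_def by measurable
  moreover have "norm (f p) \<le> real n + 1" for p
    unfolding f_def by (intro norm_triangle_le add_mono norm_sum_cis_le) simp
  ultimately have "integrable (phase_measure n \<Otimes>\<^sub>M uniform_phase) (\<lambda>p. rate b P (f p))"
    by (rule pair.integrable_rate[OF assms])
  from pair.integrable_fst'[OF this] show ?thesis
    by (simp add: f_def)
qed

lemma Rbar_le_Rbar_Suc:
  assumes "P \<ge> 0" and "b > 1"
  shows "Rbar b P n \<le> Rbar b P (Suc n)"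
proof -
  have "Rbar b P n = (\<integral>\<theta>. rate b P (\<Sum>l<n. cis (\<theta> l)) \<partial>phase_measure n)"
    by (rule Rbar_eq_integral_rate)
  also have "\<dots> \<le> (\<integral>\<theta>. (\<integral>t. rate b P ((\<Sum>l<n. cis (\<theta> l)) + cis t) \<partial>uniform_phase)
      \<partial>phase_measure n)"
    using integrable_phase_mean_rate[OF assms] rate_le_phase_mean[OF assms] rate_nonneg[OF assms]
    by (intro integral_mono') (auto intro: integral_nonneg)
  also have "\<dots> = Rbar b P (Suc n)"
    by (rule Rbar_Suc[OF assms, symmetric])
  finally show ?thesis .
qed

lemma Rbar_0: "Rbar b P 0 = 0"
  by (simp add: Rbar_def)

lemma mono_Rbar:
  assumes "P \<ge> 0" and "b > 1"
  shows "mono (Rbar b P)"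
  using Rbar_le_Rbar_Suc[OF assms] by (simp add: mono_iff_le_Suc)

lemma mult_prob_superlevel_le_Max:
  fixes p :: "nat pmf" and R :: "nat \<Rightarrow> real" and r :: real
  assumes "L \<ge> 1" and "set_pmf p \<subseteq> {..L}" and "mono R" and "R 0 = 0"
  shows "r * measure_pmf.prob p {k. R k \<ge> r}
    \<le> Max ((\<lambda>i. measure_pmf.prob p {k. k \<ge> i} * R i) ` {1..L})"
    (is "_ \<le> Max (?g ` _)")
proof -
  have R_nonneg: "R i \<ge> 0" for i
    using monoD[OF assms(3), of 0 i] assms(4) by simp
  have le_Max: "?g i \<le> Max (?g ` {1..L})" if "i \<in> {1..L}" for i
    using that by (intro Max_ge) auto
  have "0 \<le> ?g 1"
    using R_nonneg by simp
  also have "\<dots> \<le> Max (?g ` {1..L})"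
    using assms(1) by (intro le_Max) auto
  finally have Max_nonneg: "0 \<le> Max (?g ` {1..L})" .
  show ?thesis
  proof (cases "r > 0 \<and> (\<exists>k. R k \<ge> r)")
    case False
    then have "r * measure_pmf.prob p {k. R k \<ge> r} \<le> 0"
      by (auto simp: mult_nonpos_nonneg)
    with Max_nonneg show ?thesis
      by linarith
  next
    case True
    define i where "i = (LEAST k. R k \<ge> r)"
    have "R i \<ge> r"
      using True unfolding i_def by (auto intro: LeastI_ex)
    have superlevel: "{k. R k \<ge> r} = {k. k \<ge> i}"
      using \<open>R i \<ge> r\<close> monoD[OF assms(3)] by (auto simp: i_def intro: Least_le order.trans)
    show ?thesis
    proof (cases "i \<le> L")
      case True
      have "i \<ge> 1"
        using \<open>R i \<ge> r\<close> \<open>r > 0 \<and> _\<close> assms(4) by (cases i) auto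
      have "r * measure_pmf.prob p {k. R k \<ge> r} \<le> ?g i"
        unfolding superlevel using \<open>R i \<ge> r\<close> by (simp add: mult.commute mult_right_mono)
      also have "\<dots> \<le> Max (?g ` {1..L})"
        using True \<open>i \<ge> 1\<close> by (intro le_Max) auto
      finally show ?thesis .
    next
      case False
      then have "measure_pmf.prob p {k. k \<ge> i} = 0"
        using assms(2) by (auto simp: measure_pmf_zero_iff)
      with Max_nonneg show ?thesis
        by (simp add: superlevel)
    qed
  qed
qed

lemma SUP_mult_prob_superlevel_eq_Max:
  fixes p :: "nat pmf" and R :: "nat \<Rightarrow> real"
  assumes "L \<ge> 1" and "set_pmf p \<subseteq> {..L}" and "mono R" and "R 0 = 0"
  shows "(SUP r::real. r * measure_pmf.prob p {k. R k \<ge> r})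
    = Max ((\<lambda>i. measure_pmf.prob p {k. k \<ge> i} * R i) ` {1..L})"
    (is "?S = Max (?g ` _)")
proof (rule antisym)
  show "?S \<le> Max (?g ` {1..L})"
    by (rule cSUP_least[OF UNIV_not_empty mult_prob_superlevel_le_Max[OF assms]])
  have "Max (?g ` {1..L}) \<in> ?g ` {1..L}"
    using assms(1) by (intro Max_in) auto
  then obtain i where Max_eq: "Max (?g ` {1..L}) = ?g i"
    by auto
  have "?g i \<le> R i * measure_pmf.prob p {k. R k \<ge> R i}"
    using monoD[OF assms(3)] monoD[OF assms(3), of 0 i] assms(4)
    by (subst mult.commute) (auto intro!: mult_left_mono measure_pmf.finite_measure_mono)
  also have "\<dots> \<le> ?S"
    by (rule cSUP_upper[OF UNIV_I bdd_aboveI2[OF mult_prob_superlevel_le_Max[OF assms]]])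
  finally show "Max (?g ` {1..L}) \<le> ?S"
    unfolding Max_eq .
qed

theorem proposition6:
  fixes L :: nat and P pB b :: real
  assumes "L \<ge> 1" and "P \<ge> 0" and "0 \<le> pB" and "pB \<le> 1" and "b > 1"
  shows "(SUP r::real. r * measure_pmf.prob (binomial_pmf L (1 - pB)) {k. Rbar b P k \<ge> r})
       = Max ((\<lambda>i. measure_pmf.prob (binomial_pmf L (1 - pB)) {k. k \<ge> i} * Rbar b P i) ` {1..L})"
proof (rule SUP_mult_prob_superlevel_eq_Max)
  show "set_pmf (binomial_pmf L (1 - pB)) \<subseteq> {..L}"
    using assms by (auto simp: set_pmf_binomial_eq)
  show "mono (Rbar b P)"
    using assms by (intro mono_Rbar)
qed (use assms Rbar_0 in auto)

end
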